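(* Let $\mathfrak R=(\mathcal B,\mathcal S,\pi)$ be a return risk measurement regime and assume that each of the sets $\mathcal C$, $\mathcal B$, $\mathcal S$ is logconvex, i.e. for $\mathcal D\in\{\mathcal C,\mathcal B,\mathcal S\}$: $X,Y\in\mathcal D$ and $\alpha\in(0,1)$ imply $X^\alpha Y^{1-\alpha}\in\mathcal D$. (i) If $\pi$ is quasi-logconvex, i.e. $\pi(X^\alpha Y^{1-\alpha})\le\max\{\pi(X),\pi(Y)\}$ for all $X,Y\in\mathcal S$, $\alpha\in(0,1)$, then $\eta_{\mathfrak R}$ is quasi-logconvex: $\eta_{\mathfrak R}(X^\alpha Y^{1-\alpha})\le\max\{\eta_{\mathfrak R}(X),\eta_{\mathfrak R}(Y)\}$ for all $X,Y\in\mathcal C$, $\alpha\in(0,1)$. (ii) If $\pi$ is logconvex, i.e. $\pi(X^\alpha Y^{1-\alpha})\le\pi(X)^\alpha\pi(Y)^{1-\alpha}$ for all $X,Y\in\mathcal S$, $\alpha\in(0,1)$, then $\eta_{\mathfrak R}$ is logconvex: $\eta_{\mathfrak R}(X^\alpha Y^{1-\alpha})\le\eta_{\mathfrak R}(X)^\alpha\eta_{\mathfrak R}(Y)^{1-\alpha}$ for all $X,Y\in\mathcal C$, $\alpha\in(0,1)$.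
   Context: Let $(\Omega,\mathcal F,P)$ be a probability space, $L^0$ the space of real random variables with the a.s. order, $L^0_{++}=\{X\in L^0:X>0\text{ a.s.}\}$, and $\frac{\mathcal A}{\mathcal D}=\{AD^{-1}:A\in\mathcal A,D\in\mathcal D\}$. Setting: nonempty sets $\mathcal C,\mathcal S,\mathcal K\subset L^0_{++}$ (model set, security set, set of relative losses) with $\frac{\mathcal C}{\mathcal S}\subset\mathcal K$; a pricing map $\pi\colon\mathcal S\to(0,\infty)$; a relative acceptance set $\mathcal B$, i.e. a nonempty proper subset of $\mathcal K$ such that $X\in\mathcal B$, $Y\in\mathcal K$, $Y\le X$ imply $Y\in\mathcal B$. $\mathfrak R=(\mathcal B,\mathcal S,\pi)$ is a return risk measurement regime, and $\eta_{\mathfrak R}(X)=\inf\{\pi(Z):Z\in\mathcal S,\ X/Z\in\mathcal B\}\in[0,\infty]$, $X\in\mathcal C$ ($\inf\emptyset=\infty$), is the MARRM. Conventions in $[0,\infty]$: $\infty^\alpha=\infty$ for $\alpha>0$, $0\cdot\infty$ is interpreted so that products involving $\infty$ with a positive factor are $\infty$. *)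

theory Defs
  imports "HOL-Probability.Probability"
begin

text \<open>Random variables are represented by measurable real functions on the sample
space; the order on L0 is the almost sure order. Strictly positive random variables:\<close>
definition L0pp :: "'a measure \<Rightarrow> ('a \<Rightarrow> real) set" where
  "L0pp M = {X. X \<in> borel_measurable M \<and> (AE \<omega> in M. X \<omega> > 0)}"

definition ratios :: "('a \<Rightarrow> real) set \<Rightarrow> ('a \<Rightarrow> real) set \<Rightarrow> ('a \<Rightarrow> real) set" where
  "ratios A D = {(\<lambda>\<omega>. X \<omega> / Z \<omega>) | X Z. X \<in> A \<and> Z \<in> D}"

definition rel_acceptance_set :: "'a measure \<Rightarrow> ('a \<Rightarrow> real) set \<Rightarrow> ('a \<Rightarrow> real) set \<Rightarrow> bool" where
  "rel_acceptance_set M K B \<longleftrightarrow> B \<noteq> {} \<and> B \<subset> K \<and>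
     (\<forall>X Y. X \<in> B \<longrightarrow> Y \<in> K \<longrightarrow> (AE \<omega> in M. Y \<omega> \<le> X \<omega>) \<longrightarrow> Y \<in> B)"

definition geo :: "real \<Rightarrow> ('a \<Rightarrow> real) \<Rightarrow> ('a \<Rightarrow> real) \<Rightarrow> ('a \<Rightarrow> real)" where
  "geo a X Y = (\<lambda>\<omega>. X \<omega> powr a * Y \<omega> powr (1 - a))"

definition logconvex_set :: "('a \<Rightarrow> real) set \<Rightarrow> bool" where
  "logconvex_set D \<longleftrightarrow> (\<forall>X\<in>D. \<forall>Y\<in>D. \<forall>a::real. 0 < a \<and> a < 1 \<longrightarrow> geo a X Y \<in> D)"

text \<open>The MARRM with values in [0,\<infinity>] (Inf of empty set is \<infinity>).\<close>
definition eta :: "('a \<Rightarrow> real) set \<Rightarrow> ('a \<Rightarrow> real) set \<Rightarrow> (('a \<Rightarrow> real) \<Rightarrow> real)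
     \<Rightarrow> ('a \<Rightarrow> real) \<Rightarrow> ennreal" where
  "eta B S \<pi> X = Inf {ennreal (\<pi> Z) | Z. Z \<in> S \<and> (\<lambda>\<omega>. X \<omega> / Z \<omega>) \<in> B}"

definition egeo :: "real \<Rightarrow> ennreal \<Rightarrow> ennreal \<Rightarrow> ennreal" where
  "egeo a x y = (if x = \<top> \<or> y = \<top> then \<top>
                 else ennreal (enn2real x powr a * enn2real y powr (1 - a)))"

end

theory Submission
  imports Defs
begin

text \<open>If the securities \<open>Z\<^sub>1\<close>, \<open>Z\<^sub>2\<close> make \<open>X\<close>, \<open>Y\<close> acceptable, then their geometric mean
  \<open>geo a Z\<^sub>1 Z\<^sub>2\<close> makes \<open>geo a X Y\<close> acceptable: the ratio of the geometric means is the
  geometric mean of the ratios, which lies in the logconvex set \<open>B\<close>. So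
  \<open>\<eta> (geo a X Y) \<le> \<pi> (geo a Z\<^sub>1 Z\<^sub>2)\<close>, and (quasi-)logconvexity of \<open>\<pi>\<close> passes to the
  infimum \<open>\<eta>\<close>. In the logconvex case the \<open>Z\<^sub>i\<close> are chosen with prices within \<open>\<delta>\<close> of
  \<open>\<eta> X\<close>, \<open>\<eta> Y\<close>, and \<open>\<delta> \<rightarrow> 0\<close> uses the continuity of \<open>(x, y) \<mapsto> x powr a * y powr (1 - a)\<close>.\<close>

lemma eta_le_price:
  assumes "Z \<in> S" "(\<lambda>\<omega>. X \<omega> / Z \<omega>) \<in> B"
  shows "eta B S \<pi> X \<le> ennreal (\<pi> Z)"
  unfolding eta_def using assms by (intro Inf_lower) blast

lemma eta_lessE:
  assumes "eta B S \<pi> X < t"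
  obtains Z where "Z \<in> S" "(\<lambda>\<omega>. X \<omega> / Z \<omega>) \<in> B" "ennreal (\<pi> Z) < t"
  using assms unfolding eta_def by (auto simp: Inf_less_iff)

lemma ennreal_le_right_limit:
  fixes f :: "real \<Rightarrow> real"
  assumes "(f \<longlongrightarrow> f 0) (at_right 0)" and "\<And>d. d > 0 \<Longrightarrow> x \<le> ennreal (f d)"
  shows "x \<le> ennreal (f 0)"
proof (rule tendsto_le[OF trivial_limit_at_right_real])
  show "((\<lambda>d. ennreal (f d)) \<longlongrightarrow> ennreal (f 0)) (at_right 0)"
    using assms(1) by (rule tendsto_ennrealI)
  show "((\<lambda>_. x) \<longlongrightarrow> x) (at_right 0)"
    by simp
  show "\<forall>\<^sub>F d in at_right 0. x \<le> ennreal (f d)"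
    using eventually_at_right_less[of 0] by eventually_elim (rule assms(2))
qed

locale logconvex_regime =
  fixes M :: "'a measure" and C S K B :: "('a \<Rightarrow> real) set"
  assumes C_pos: "C \<subseteq> L0pp M" and S_pos: "S \<subseteq> L0pp M"
    and ratios_subset: "ratios C S \<subseteq> K"
    and acceptance: "rel_acceptance_set M K B"
    and logconvex_C: "logconvex_set C" and logconvex_B: "logconvex_set B"
    and logconvex_S: "logconvex_set S"
begin

lemma geo_acceptable:
  assumes X: "X \<in> C" and Y: "Y \<in> C" and Z\<^sub>1: "Z\<^sub>1 \<in> S" and Z\<^sub>2: "Z\<^sub>2 \<in> S"
    and B\<^sub>1: "(\<lambda>\<omega>. X \<omega> / Z\<^sub>1 \<omega>) \<in> B" and B\<^sub>2: "(\<lambda>\<omega>. Y \<omega> / Z\<^sub>2 \<omega>) \<in> B"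
    and a: "0 < a" "a < 1"
  shows "geo a Z\<^sub>1 Z\<^sub>2 \<in> S" and "(\<lambda>\<omega>. geo a X Y \<omega> / geo a Z\<^sub>1 Z\<^sub>2 \<omega>) \<in> B"
proof -
  show geo_S: "geo a Z\<^sub>1 Z\<^sub>2 \<in> S"
    using logconvex_S Z\<^sub>1 Z\<^sub>2 a unfolding logconvex_set_def by blast
  have "geo a X Y \<in> C"
    using logconvex_C X Y a unfolding logconvex_set_def by blast
  with geo_S have in_K: "(\<lambda>\<omega>. geo a X Y \<omega> / geo a Z\<^sub>1 Z\<^sub>2 \<omega>) \<in> K"
    using ratios_subset unfolding ratios_def by blast
  have geo_B: "geo a (\<lambda>\<omega>. X \<omega> / Z\<^sub>1 \<omega>) (\<lambda>\<omega>. Y \<omega> / Z\<^sub>2 \<omega>) \<in> B"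
    using logconvex_B B\<^sub>1 B\<^sub>2 a unfolding logconvex_set_def by blast
  have "AE \<omega> in M. X \<omega> > 0" "AE \<omega> in M. Y \<omega> > 0"
    "AE \<omega> in M. Z\<^sub>1 \<omega> > 0" "AE \<omega> in M. Z\<^sub>2 \<omega> > 0"
    using C_pos S_pos X Y Z\<^sub>1 Z\<^sub>2 unfolding L0pp_def by auto
  then have "AE \<omega> in M. geo a X Y \<omega> / geo a Z\<^sub>1 Z\<^sub>2 \<omega>
      \<le> geo a (\<lambda>\<omega>. X \<omega> / Z\<^sub>1 \<omega>) (\<lambda>\<omega>. Y \<omega> / Z\<^sub>2 \<omega>) \<omega>"
    by eventually_elim (simp add: geo_def powr_divide)
  with acceptance geo_B in_K show "(\<lambda>\<omega>. geo a X Y \<omega> / geo a Z\<^sub>1 Z\<^sub>2 \<omega>) \<in> B"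
    unfolding rel_acceptance_set_def by blast
qed

lemma eta_geo_le_price_geo:
  assumes "X \<in> C" "Y \<in> C" "Z\<^sub>1 \<in> S" "Z\<^sub>2 \<in> S"
    and "(\<lambda>\<omega>. X \<omega> / Z\<^sub>1 \<omega>) \<in> B" "(\<lambda>\<omega>. Y \<omega> / Z\<^sub>2 \<omega>) \<in> B"
    and "0 < a" "a < 1"
  shows "eta B S \<pi> (geo a X Y) \<le> ennreal (\<pi> (geo a Z\<^sub>1 Z\<^sub>2))"
  using geo_acceptable[OF assms] by (rule eta_le_price)

lemma eta_quasi_logconvex:
  assumes \<pi>_quasi_logconvex: "\<And>Z\<^sub>1 Z\<^sub>2. Z\<^sub>1 \<in> S \<Longrightarrow> Z\<^sub>2 \<in> S \<Longrightarrow>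
      \<pi> (geo a Z\<^sub>1 Z\<^sub>2) \<le> max (\<pi> Z\<^sub>1) (\<pi> Z\<^sub>2)"
    and X: "X \<in> C" and Y: "Y \<in> C" and a: "0 < a" "a < 1"
  shows "eta B S \<pi> (geo a X Y) \<le> max (eta B S \<pi> X) (eta B S \<pi> Y)"
proof (rule dense_ge)
  fix t
  assume "max (eta B S \<pi> X) (eta B S \<pi> Y) < t"
  then have "eta B S \<pi> X < t" "eta B S \<pi> Y < t"
    by simp_all
  then obtain Z\<^sub>1 Z\<^sub>2 where
    Z\<^sub>1: "Z\<^sub>1 \<in> S" "(\<lambda>\<omega>. X \<omega> / Z\<^sub>1 \<omega>) \<in> B" "ennreal (\<pi> Z\<^sub>1) < t" and
    Z\<^sub>2: "Z\<^sub>2 \<in> S" "(\<lambda>\<omega>. Y \<omega> / Z\<^sub>2 \<omega>) \<in> B" "ennreal (\<pi> Z\<^sub>2) < t"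
    by (elim eta_lessE)
  have "eta B S \<pi> (geo a X Y) \<le> ennreal (\<pi> (geo a Z\<^sub>1 Z\<^sub>2))"
    using eta_geo_le_price_geo X Y Z\<^sub>1 Z\<^sub>2 a by blast
  also have "\<dots> \<le> ennreal (max (\<pi> Z\<^sub>1) (\<pi> Z\<^sub>2))"
    using \<pi>_quasi_logconvex Z\<^sub>1 Z\<^sub>2 by (intro ennreal_leI) blast
  also have "\<dots> < t"
    using Z\<^sub>1 Z\<^sub>2 by (simp add: max_def)
  finally show "eta B S \<pi> (geo a X Y) \<le> t"
    by simp
qed

lemma eta_logconvex:
  assumes \<pi>_nonneg: "\<And>Z. Z \<in> S \<Longrightarrow> 0 \<le> \<pi> Z"
    and \<pi>_logconvex: "\<And>Z\<^sub>1 Z\<^sub>2. Z\<^sub>1 \<in> S \<Longrightarrow> Z\<^sub>2 \<in> S \<Longrightarrow>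
      \<pi> (geo a Z\<^sub>1 Z\<^sub>2) \<le> \<pi> Z\<^sub>1 powr a * \<pi> Z\<^sub>2 powr (1 - a)"
    and X: "X \<in> C" and Y: "Y \<in> C" and a: "0 < a" "a < 1"
  shows "eta B S \<pi> (geo a X Y) \<le> egeo a (eta B S \<pi> X) (eta B S \<pi> Y)"
proof (cases "eta B S \<pi> X = \<top> \<or> eta B S \<pi> Y = \<top>")
  case True
  then show ?thesis
    by (simp add: egeo_def)
next
  case False
  then obtain x y where x: "eta B S \<pi> X = ennreal x" "0 \<le> x"
    and y: "eta B S \<pi> Y = ennreal y" "0 \<le> y"
    by (metis ennreal_cases)
  define f where "f d = (x + d) powr a * (y + d) powr (1 - a)" for d :: real
  have "eta B S \<pi> (geo a X Y) \<le> ennreal (f 0)"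
  proof (rule ennreal_le_right_limit)
    show "(f \<longlongrightarrow> f 0) (at_right 0)"
      unfolding f_def using x y a
      by (intro tendsto_intros tendsto_powr2) (auto simp: eventually_at_filter)
  next
    fix d :: real
    assume "d > 0"
    then have "eta B S \<pi> X < ennreal (x + d)" "eta B S \<pi> Y < ennreal (y + d)"
      using x y by (simp_all add: ennreal_lessI)
    then obtain Z\<^sub>1 Z\<^sub>2 where
      Z\<^sub>1: "Z\<^sub>1 \<in> S" "(\<lambda>\<omega>. X \<omega> / Z\<^sub>1 \<omega>) \<in> B" "ennreal (\<pi> Z\<^sub>1) < ennreal (x + d)" and
      Z\<^sub>2: "Z\<^sub>2 \<in> S" "(\<lambda>\<omega>. Y \<omega> / Z\<^sub>2 \<omega>) \<in> B" "ennreal (\<pi> Z\<^sub>2) < ennreal (y + d)"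
      by (elim eta_lessE)
    have nonneg: "0 \<le> \<pi> Z\<^sub>1" "0 \<le> \<pi> Z\<^sub>2"
      using \<pi>_nonneg Z\<^sub>1 Z\<^sub>2 by blast+
    moreover have "\<pi> Z\<^sub>1 \<le> x + d" "\<pi> Z\<^sub>2 \<le> y + d"
      using Z\<^sub>1 Z\<^sub>2 nonneg by (auto simp: ennreal_less_iff)
    ultimately have "\<pi> Z\<^sub>1 powr a * \<pi> Z\<^sub>2 powr (1 - a) \<le> f d"
      unfolding f_def using a by (intro mult_mono powr_mono2) auto
    with \<pi>_logconvex Z\<^sub>1 Z\<^sub>2 have "\<pi> (geo a Z\<^sub>1 Z\<^sub>2) \<le> f d"
      by (meson order_trans)
    moreover have "eta B S \<pi> (geo a X Y) \<le> ennreal (\<pi> (geo a Z\<^sub>1 Z\<^sub>2))"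
      using eta_geo_le_price_geo X Y Z\<^sub>1 Z\<^sub>2 a by blast
    ultimately show "eta B S \<pi> (geo a X Y) \<le> ennreal (f d)"
      by (meson ennreal_leI order_trans)
  qed
  then show ?thesis
    using x y by (simp add: egeo_def f_def)
qed

end

theorem mainTheorem5:
  fixes M :: "'a measure"
    and C S K B :: "('a \<Rightarrow> real) set"
    and \<pi> :: "('a \<Rightarrow> real) \<Rightarrow> real"
  assumes "prob_space M"
    and "C \<noteq> {}" "S \<noteq> {}" "K \<noteq> {}"
    and "C \<subseteq> L0pp M" "S \<subseteq> L0pp M" "K \<subseteq> L0pp M"
    and "ratios C S \<subseteq> K"
    and "\<forall>Z\<in>S. \<pi> Z > 0"
    and "rel_acceptance_set M K B"
    and "logconvex_set C" "logconvex_set B" "logconvex_set S"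
  shows "((\<forall>X\<in>S. \<forall>Y\<in>S. \<forall>a::real. 0 < a \<and> a < 1 \<longrightarrow>
             \<pi> (geo a X Y) \<le> max (\<pi> X) (\<pi> Y)) \<longrightarrow>
          (\<forall>X\<in>C. \<forall>Y\<in>C. \<forall>a::real. 0 < a \<and> a < 1 \<longrightarrow>
             eta B S \<pi> (geo a X Y) \<le> max (eta B S \<pi> X) (eta B S \<pi> Y)))
       \<and> ((\<forall>X\<in>S. \<forall>Y\<in>S. \<forall>a::real. 0 < a \<and> a < 1 \<longrightarrow>
             \<pi> (geo a X Y) \<le> \<pi> X powr a * \<pi> Y powr (1 - a)) \<longrightarrow>
          (\<forall>X\<in>C. \<forall>Y\<in>C. \<forall>a::real. 0 < a \<and> a < 1 \<longrightarrow>
             eta B S \<pi> (geo a X Y) \<le> egeo a (eta B S \<pi> X) (eta B S \<pi> Y)))"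
proof -
  interpret logconvex_regime M C S K B
    using assms(5,6,8,10-13) by unfold_locales
  have \<pi>_nonneg: "\<And>Z. Z \<in> S \<Longrightarrow> 0 \<le> \<pi> Z"
    using assms(9) by (simp add: less_imp_le)
  show ?thesis
    using \<pi>_nonneg by (auto intro!: eta_quasi_logconvex eta_logconvex)
qed

end
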